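(* Let $p$ be a prime, $q=p^r$, $\mathscr{C}\subseteq\mathbb{F}_q^n$ a linear code of dimension $k$ and $\mathscr{D}\subseteq\mathbb{F}_{q^k}^m$ a linear code of dimension $s$ with $0<s<m$ such that for every $1\le i\le m$ some codeword of $\mathscr{D}$ has $i$-th coordinate equal to $1$. Let $H$ and $H'$ be $\mathrm{BH}(q^k,p)$ matrices with rows indexed by $\mathbb{F}_{q^k}$ and columns indexed by $\mathscr{C}$. If $Q_H(\mathscr{C},\mathscr{D})=Q_{H'}(\mathscr{C},\mathscr{D})$, then $H$ and $H'$ are row-equivalent. Conversely, if $\mathscr{D}=\{(\lambda,\ldots,\lambda):\lambda\in\mathbb{F}_{q^k}\}\subseteq\mathbb{F}_{q^k}^m$ and $H,H'$ are row-equivalent, then $Q_H(\mathscr{C},\mathscr{D})=Q_{H'}(\mathscr{C},\mathscr{D})$.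
   Context: $\zeta=e^{2\pi i/p}$. A $\mathrm{BH}(q^k,p)$ matrix is a $q^k\times q^k$ matrix with entries $p$-th roots of unity with $HH^\dagger=q^kI$. Such a matrix with rows indexed by $\mathbb{F}_{q^k}$ and columns by $\mathscr{C}$ can be written $H=[\zeta^{f_\lambda(\mathbf{c})}]_{\lambda\in\mathbb{F}_{q^k},\mathbf{c}\in\mathscr{C}}$ for functions $f_\lambda:\mathscr{C}\to\mathbb{F}_p$. Set $\phi_\lambda=q^{-k/2}\sum_{\mathbf{c}\in\mathscr{C}}\zeta^{f_\lambda(\mathbf{c})}|\mathbf{c}\rangle\in(\mathbb{C}^q)^{\otimes n}$ (where $(\mathbb{C}^q)^{\otimes n}$ has orthonormal basis $|\mathbf{x}\rangle$, $\mathbf{x}\in\mathbb{F}_q^n$), $\Phi_\Lambda=\phi_{\lambda_1}\otimes\cdots\otimes\phi_{\lambda_m}$ for $\Lambda=(\lambda_1,\ldots,\lambda_m)$, and $Q_H(\mathscr{C},\mathscr{D})=\operatorname{span}\{\Phi_\Lambda:\Lambda\in\mathscr{D}\}$. Two such matrices are row-equivalent if one is obtained from the other by permuting rows and multiplying rows by $p$-th roots of unity. *)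

theory Defs
  imports "HOL-Analysis.Analysis"
begin

definition linear_code :: "('a::{field,finite}^'n) set \<Rightarrow> nat \<Rightarrow> bool" where
  "linear_code C k \<longleftrightarrow> vec.subspace C \<and> vec.dim C = k"

text \<open>A BH(N,p) matrix with rows indexed by the type 'b and columns indexed by the set C
  (only the entries H lam c with c in C matter): entries are p-th roots of unity and
  H H^dagger = N I.\<close>

definition is_BH :: "nat \<Rightarrow> nat \<Rightarrow> 'c set \<Rightarrow> ('b::finite \<Rightarrow> 'c \<Rightarrow> complex) \<Rightarrow> bool" where
  "is_BH N p C H \<longleftrightarrow>
     (\<forall>lam. \<forall>c\<in>C. H lam c ^ p = 1) \<and>
     (\<forall>lam mu. (\<Sum>c\<in>C. H lam c * cnj (H mu c)) = (if lam = mu then of_nat N else 0))"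

definition row_equiv :: "nat \<Rightarrow> 'c set \<Rightarrow> ('b \<Rightarrow> 'c \<Rightarrow> complex) \<Rightarrow> ('b \<Rightarrow> 'c \<Rightarrow> complex) \<Rightarrow> bool" where
  "row_equiv p C H H' \<longleftrightarrow>
     (\<exists>\<sigma> w. bij \<sigma> \<and> (\<forall>lam. w lam ^ p = 1) \<and>
        (\<forall>lam. \<forall>c\<in>C. H' lam c = w lam * H (\<sigma> lam) c))"

text \<open>phi_lam in (C^q)^{\<otimes> n}, written as a coefficient function on the basis |x>, x in F_q^n:
  phi_lam = q^{-k/2} \<Sum>_{c\<in>C} H lam c |c>.  Here N = q^k.\<close>

definition phi :: "nat \<Rightarrow> ('a^'n) set \<Rightarrow> ('b \<Rightarrow> 'a^'n \<Rightarrow> complex) \<Rightarrow> 'b \<Rightarrow> 'a^'n \<Rightarrow> complex" where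
  "phi N C H lam x = (if x \<in> C then complex_of_real (1 / sqrt (real N)) * H lam x else 0)"

text \<open>Phi_Lam = phi_{lam_1} \<otimes> ... \<otimes> phi_{lam_m}, as a coefficient function on the
  product basis |x_1> \<otimes> ... \<otimes> |x_m> of ((C^q)^{\<otimes> n})^{\<otimes> m}.\<close>

definition Phi :: "nat \<Rightarrow> ('a^'n) set \<Rightarrow> ('b \<Rightarrow> 'a^'n \<Rightarrow> complex) \<Rightarrow> 'b^'m \<Rightarrow> ('m::finite \<Rightarrow> 'a^'n) \<Rightarrow> complex" where
  "Phi N C H Lam X = (\<Prod>j\<in>UNIV. phi N C H (Lam $ j) (X j))"

definition QH :: "nat \<Rightarrow> ('a^'n) set \<Rightarrow> ('b \<Rightarrow> 'a^'n \<Rightarrow> complex) \<Rightarrow> ('b^'m) set \<Rightarrow> (('m::finite \<Rightarrow> 'a^'n) \<Rightarrow> complex) set" where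
  "QH N C H D = {(\<lambda>X. \<Sum>Lam\<in>D. a Lam * Phi N C H Lam X) | a. True}"

end

theory Submission
  imports Defs
begin

text \<open>
  For a BH matrix H the vectors Phi_H(L) are orthonormal, so the coefficients of an element
  F of Q_H(C,D) are the inner products <Phi_H(M), F>, and for F = Phi_H'(L) these factor as
  the products over j of U(M_j, L_j), where U(mu, lam) = <phi_H(mu), phi_H'(lam)>.
  If Q_H(C,D) = Q_H'(C,D), then for L in D the product vanishes whenever M is not in D,
  but not for all M. Since D is a proper subspace, some unit vector e_j is missing from D,
  and changing a nonvanishing M in coordinate j alone would produce two codewords differing
  by a nonzero multiple of e_j. Hence every column of U has exactly one nonzero entry, at
  sigma(lam), so Phi_H'(L) is a multiple of a single Phi_H(M); slicing this tensor identity
  gives H' lam = w(lam) H(sigma lam), and orthogonality of the rows of H' makes sigma a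
  permutation. Conversely, a row equivalence only rescales and permutes the Phi_H(L) with
  L constant.
\<close>

definition fun_inner :: "('x::finite \<Rightarrow> complex) \<Rightarrow> ('x \<Rightarrow> complex) \<Rightarrow> complex" where
  "fun_inner f g = (\<Sum>x\<in>UNIV. cnj (f x) * g x)"

lemma fun_inner_sum_right:
  "fun_inner F (\<lambda>X. \<Sum>M\<in>D. a M * f M X) = (\<Sum>M\<in>D. a M * fun_inner F (f M))"
proof -
  have "fun_inner F (\<lambda>X. \<Sum>M\<in>D. a M * f M X) = (\<Sum>X\<in>UNIV. \<Sum>M\<in>D. a M * (cnj (F X) * f M X))"
    unfolding fun_inner_def by (simp add: sum_distrib_left mult_ac)
  also have "\<dots> = (\<Sum>M\<in>D. \<Sum>X\<in>UNIV. a M * (cnj (F X) * f M X))"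
    by (rule sum.swap)
  also have "\<dots> = (\<Sum>M\<in>D. a M * fun_inner F (f M))"
    unfolding fun_inner_def by (simp add: sum_distrib_left)
  finally show ?thesis .
qed

lemma fun_inner_orthonormal_sum:
  assumes "\<And>M M'. fun_inner (e M) (e M') = (if M = M' then 1 else 0)" and "finite D"
  shows "fun_inner (e M') (\<lambda>X. \<Sum>M\<in>D. a M * e M X) = (if M' \<in> D then a M' else 0)"
proof -
  have "fun_inner (e M') (\<lambda>X. \<Sum>M\<in>D. a M * e M X) = (\<Sum>M\<in>D. if M' = M then a M else 0)"
    unfolding fun_inner_sum_right assms(1) by (intro sum.cong) auto
  then show ?thesis
    using assms(2) by simp
qed

lemma fun_inner_tensor:
  fixes f g :: "'m::finite \<Rightarrow> 'x::finite \<Rightarrow> complex"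
  shows "fun_inner (\<lambda>X. \<Prod>j\<in>UNIV. f j (X j)) (\<lambda>X. \<Prod>j\<in>UNIV. g j (X j))
    = (\<Prod>j\<in>UNIV. fun_inner (f j) (g j))"
  using prod_sum_PiE[of "UNIV::'m set" "\<lambda>_. UNIV::'x set" "\<lambda>j x. cnj (f j x) * g j x"]
  unfolding fun_inner_def by (simp add: prod.distrib)

lemma prod_factor_proportional:
  fixes f g :: "'m::finite \<Rightarrow> 'x \<Rightarrow> 'k::field"
  assumes "\<And>X. (\<Prod>j\<in>UNIV. f j (X j)) = \<alpha> * (\<Prod>j\<in>UNIV. g j (X j))"
    and "\<And>j. j \<noteq> j0 \<Longrightarrow> f j x0 \<noteq> 0"
  shows "\<exists>\<beta>. \<forall>x. f j0 x = \<beta> * g j0 x"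
proof -
  have slice: "(\<Prod>j\<in>UNIV. h j (if j = j0 then x else x0)) = h j0 x * (\<Prod>j\<in>UNIV-{j0}. h j x0)"
    for h :: "'m \<Rightarrow> 'x \<Rightarrow> 'k" and x
    by (subst prod.remove[of UNIV j0]) (auto intro!: prod.cong)
  define Pf where "Pf = (\<Prod>j\<in>UNIV-{j0}. f j x0)"
  define Pg where "Pg = (\<Prod>j\<in>UNIV-{j0}. g j x0)"
  have "Pf \<noteq> 0"
    unfolding Pf_def using assms(2) by simp
  have "f j0 x * Pf = \<alpha> * (g j0 x * Pg)" for x
    using assms(1)[of "\<lambda>j. if j = j0 then x else x0"] unfolding slice Pf_def Pg_def .
  then have "f j0 x = (\<alpha> * Pg / Pf) * g j0 x" for x
    using \<open>Pf \<noteq> 0\<close> by (simp add: field_simps)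
  then show ?thesis by blast
qed

lemma axis_notin_if_dim_less:
  fixes D :: "('b::field^'m::finite) set"
  assumes "vec.subspace D" and "vec.dim D < CARD('m)"
  shows "\<exists>j. axis j 1 \<notin> D"
proof (rule ccontr)
  assume "\<not> ?thesis"
  then have "cart_basis \<subseteq> D"
    unfolding cart_basis_def by auto
  then have "vec.span cart_basis \<subseteq> D"
    using assms(1) vec.span_minimal by blast
  then have "D = UNIV" by auto
  then show False
    using assms(2) vec_dim_card[where 'a='b and 'n='m] by simp
qed

lemma column_unique_nonzero:
  fixes D :: "('b::field^'m::finite) set" and U :: "'b \<Rightarrow> 'b \<Rightarrow> 'z::zero"
  assumes D: "vec.subspace D" and j0: "axis j0 1 \<notin> D"
    and d: "d \<in> D" "d $ j0 = 1"
    and closed: "\<And>L M. L \<in> D \<Longrightarrow> \<forall>j. U (M $ j) (L $ j) \<noteq> 0 \<Longrightarrow> M \<in> D"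
    and full: "\<And>L. L \<in> D \<Longrightarrow> \<exists>M. \<forall>j. U (M $ j) (L $ j) \<noteq> 0"
  shows "\<exists>!mu. U mu lam \<noteq> 0"
proof -
  define L where "L = lam *s d"
  have L: "L \<in> D" "L $ j0 = lam"
    unfolding L_def using vec.subspace_scale[OF D d(1)] d(2) by simp_all
  obtain M where M: "\<forall>j. U (M $ j) (L $ j) \<noteq> 0"
    using full[OF L(1)] by blast
  have "mu = M $ j0" if "U mu lam \<noteq> 0" for mu
  proof (rule ccontr)
    assume ne: "mu \<noteq> M $ j0"
    define M' where "M' = (\<chi> j. if j = j0 then mu else M $ j)"
    have "M \<in> D" "M' \<in> D"
      using closed[OF L(1)] M that L(2) by (auto simp: M'_def)
    then have "inverse (mu - M $ j0) *s (M' - M) \<in> D"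
      using vec.subspace_diff[OF D] vec.subspace_scale[OF D] by blast
    moreover have "inverse (mu - M $ j0) *s (M' - M) = axis j0 1"
      using ne by (auto simp: vec_eq_iff axis_def M'_def simp flip: right_diff_distrib)
    ultimately show False
      using j0 by simp
  qed
  moreover have "U (M $ j0) lam \<noteq> 0"
    using M L(2) by metis
  ultimately show ?thesis by blast
qed

lemma root_of_unity_nonzero:
  fixes w :: "'a::comm_semiring_1"
  assumes "w ^ p = 1" and "p > 0"
  shows "w \<noteq> 0"
  using assms by (auto simp: zero_power)

lemma is_BH_nonzero:
  assumes "is_BH N p C H" and "p > 0" and "c \<in> C"
  shows "H lam c \<noteq> 0"
  using assms root_of_unity_nonzero unfolding is_BH_def by blast

lemma phi_scale:
  "cnj (complex_of_real (1 / sqrt (real N)) * z) * (complex_of_real (1 / sqrt (real N)) * z')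
    = cnj z * z' / of_nat N"
proof -
  have "complex_of_real (1 / sqrt (real N)) * complex_of_real (1 / sqrt (real N)) = 1 / of_nat N"
    by (simp flip: of_real_mult)
  then show ?thesis
    by (simp add: field_simps)
qed

lemma fun_inner_phi:
  "fun_inner (phi N C H mu) (phi N C G lam) = (\<Sum>c\<in>C. cnj (H mu c) * G lam c) / of_nat N"
proof -
  have "cnj (phi N C H mu x) * phi N C G lam x
      = (if x \<in> C then cnj (H mu x) * G lam x / of_nat N else 0)" for x
    by (cases "x \<in> C") (simp_all only: phi_def phi_scale if_True if_False complex_cnj_zero mult_zero_left)
  then have "fun_inner (phi N C H mu) (phi N C G lam)
      = (\<Sum>x\<in>UNIV. if x \<in> C then cnj (H mu x) * G lam x / of_nat N else 0)"
    unfolding fun_inner_def by simp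
  also have "\<dots> = (\<Sum>c\<in>C. cnj (H mu c) * G lam c) / of_nat N"
    by (simp add: sum.If_cases sum_divide_distrib)
  finally show ?thesis .
qed

lemma fun_inner_phi_BH:
  assumes "N > 0" and "is_BH N p C H"
  shows "fun_inner (phi N C H mu) (phi N C H lam) = (if mu = lam then 1 else 0)"
proof -
  have "(\<Sum>c\<in>C. cnj (H mu c) * H lam c) = cnj (\<Sum>c\<in>C. H mu c * cnj (H lam c))"
    by (simp add: mult.commute)
  also have "\<dots> = (if mu = lam then of_nat N else 0)"
    using assms(2) unfolding is_BH_def by simp
  finally show ?thesis
    using assms(1) by (simp add: fun_inner_phi)
qed

lemma fun_inner_Phi:
  "fun_inner (Phi N C H M) (Phi N C G L) = (\<Prod>j\<in>UNIV. fun_inner (phi N C H (M $ j)) (phi N C G (L $ j)))"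
  unfolding Phi_def by (rule fun_inner_tensor)

lemma fun_inner_Phi_BH:
  assumes "N > 0" and "is_BH N p C H"
  shows "fun_inner (Phi N C H M) (Phi N C H L) = (if M = L then 1 else 0)"
proof (cases "M = L")
  case False
  then obtain j where "M $ j \<noteq> L $ j"
    by (auto simp: vec_eq_iff)
  then show ?thesis
    unfolding fun_inner_Phi fun_inner_phi_BH[OF assms] using False by (auto simp: prod_zero_iff)
qed (simp add: fun_inner_Phi fun_inner_phi_BH[OF assms])

lemma QH_expansion:
  fixes H :: "'b::finite \<Rightarrow> 'a::finite^'n \<Rightarrow> complex" and D :: "('b^'m::finite) set"
  assumes "N > 0" and "is_BH N p C H" and "F \<in> QH N C H D"
  shows "F = (\<lambda>X. \<Sum>M\<in>D. fun_inner (Phi N C H M) F * Phi N C H M X)"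
    and "M \<notin> D \<Longrightarrow> fun_inner (Phi N C H M) F = 0"
proof -
  obtain a where F: "F = (\<lambda>X. \<Sum>M\<in>D. a M * Phi N C H M X)"
    using assms(3) unfolding QH_def by blast
  have coeff: "fun_inner (Phi N C H M) F = (if M \<in> D then a M else 0)" for M
    unfolding F by (rule fun_inner_orthonormal_sum[OF fun_inner_Phi_BH[OF assms(1,2)]]) simp
  show "F = (\<lambda>X. \<Sum>M\<in>D. fun_inner (Phi N C H M) F * Phi N C H M X)"
    by (subst (1) F) (simp add: coeff)
  show "M \<notin> D \<Longrightarrow> fun_inner (Phi N C H M) F = 0"
    by (simp add: coeff)
qed

lemma Phi_in_QH:
  fixes D :: "('b::finite^'m::finite) set"
  assumes "L \<in> D"
  shows "Phi N C H L \<in> QH N C H D"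
proof -
  define a :: "'b^'m \<Rightarrow> complex" where "a M = (if M = L then 1 else 0)" for M
  have "(\<Sum>M\<in>D. a M * Phi N C H M X) = (\<Sum>M\<in>D. if M = L then Phi N C H M X else 0)" for X
    by (intro sum.cong) (auto simp: a_def)
  then have "Phi N C H L = (\<lambda>X. \<Sum>M\<in>D. a M * Phi N C H M X)"
    using assms by simp
  then show ?thesis
    unfolding QH_def by blast
qed

lemma row_equiv_if_rows_proportional:
  fixes H G :: "'b::finite \<Rightarrow> 'c \<Rightarrow> complex"
  assumes "N > 0" and "p > 0" and "c0 \<in> C"
    and BH: "is_BH N p C H" and BG: "is_BH N p C G"
    and w: "\<And>lam c. c \<in> C \<Longrightarrow> G lam c = w lam * H (\<sigma> lam) c"
  shows "row_equiv p C H G"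
proof -
  have root: "w lam ^ p = 1" for lam
  proof -
    have "G lam c0 ^ p = w lam ^ p * H (\<sigma> lam) c0 ^ p"
      using w[OF assms(3)] by (simp add: power_mult_distrib)
    then show ?thesis
      using BH BG assms(3) unfolding is_BH_def by simp
  qed
  then have "w lam \<noteq> 0" for lam
    using root_of_unity_nonzero assms(2) by blast
  have "inj \<sigma>"
  proof (rule injI, rule ccontr)
    fix lam lam' assume eq: "\<sigma> lam = \<sigma> lam'" and ne: "lam \<noteq> lam'"
    have "0 = (\<Sum>c\<in>C. G lam c * cnj (G lam' c))"
      using BG ne unfolding is_BH_def by simp
    also have "\<dots> = w lam * cnj (w lam') * (\<Sum>c\<in>C. H (\<sigma> lam) c * cnj (H (\<sigma> lam) c))"
      using w eq by (simp add: sum_distrib_left mult_ac)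
    also have "\<dots> = w lam * cnj (w lam') * of_nat N"
      using BH unfolding is_BH_def by simp
    finally show False
      using \<open>\<And>lam. w lam \<noteq> 0\<close> assms(1) by simp
  qed
  then have "bij \<sigma>"
    using finite_UNIV_inj_surj[of \<sigma>] by (simp add: bij_def)
  then show ?thesis
    unfolding row_equiv_def using root w by blast
qed

lemma rows_proportional_if_Phi_proportional:
  assumes "N > 0" and "p > 0" and "c0 \<in> C" and "is_BH N p C G"
    and "\<And>X. Phi N C G L X = \<alpha> * Phi N C H M X"
  shows "\<exists>\<beta>. \<forall>c\<in>C. G (L $ j) c = \<beta> * H (M $ j) c"
proof -
  have "phi N C G lam c0 \<noteq> 0" for lam
    using is_BH_nonzero[OF assms(4,2,3)] assms(1,3) by (simp add: phi_def)
  then obtain \<beta> where \<beta>: "\<forall>x. phi N C G (L $ j) x = \<beta> * phi N C H (M $ j) x"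
    using prod_factor_proportional[of "\<lambda>i. phi N C G (L $ i)" \<alpha> "\<lambda>i. phi N C H (M $ i)" j c0] assms(5)
    unfolding Phi_def by blast
  have "G (L $ j) c = \<beta> * H (M $ j) c" if "c \<in> C" for c
  proof -
    have "complex_of_real (1 / sqrt (real N)) * G (L $ j) c
        = complex_of_real (1 / sqrt (real N)) * (\<beta> * H (M $ j) c)"
      using \<beta>[rule_format, of c] that by (simp add: phi_def mult.left_commute)
    then show ?thesis
      using assms(1) by simp
  qed
  then show ?thesis by blast
qed

lemma QH_single_term:
  fixes H :: "'b::finite \<Rightarrow> 'a::finite^'n \<Rightarrow> complex" and D :: "('b^'m::finite) set"
  assumes "N > 0" and "is_BH N p C H" and "F \<in> QH N C H D"
    and "\<And>M'. M' \<noteq> M \<Longrightarrow> fun_inner (Phi N C H M') F = 0"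
  shows "F = (\<lambda>X. fun_inner (Phi N C H M) F * Phi N C H M X)"
proof -
  note expansion = QH_expansion[OF assms(1-3)]
  have "(\<Sum>M'\<in>D. fun_inner (Phi N C H M') F * Phi N C H M' X)
      = (\<Sum>M'\<in>D. if M' = M then fun_inner (Phi N C H M) F * Phi N C H M X else 0)" for X
    using assms(4) by (intro sum.cong) auto
  then show ?thesis
    using expansion(2)[of M] by (subst expansion(1)) auto
qed

lemma Phi_in_QH_overlap:
  fixes H G :: "'b::finite \<Rightarrow> 'a::finite^'n \<Rightarrow> complex" and D :: "('b^'m::finite) set"
  assumes "N > 0" and "is_BH N p C H" and "is_BH N p C G" and "Phi N C G L \<in> QH N C H D"
  shows "\<forall>j. fun_inner (phi N C H (M $ j)) (phi N C G (L $ j)) \<noteq> 0 \<Longrightarrow> M \<in> D"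
    and "\<exists>M. \<forall>j. fun_inner (phi N C H (M $ j)) (phi N C G (L $ j)) \<noteq> 0"
proof -
  note expansion = QH_expansion[OF assms(1,2,4)]
  show "M \<in> D" if "\<forall>j. fun_inner (phi N C H (M $ j)) (phi N C G (L $ j)) \<noteq> 0"
    using expansion(2)[of M] that by (auto simp: fun_inner_Phi)
  show "\<exists>M. \<forall>j. fun_inner (phi N C H (M $ j)) (phi N C G (L $ j)) \<noteq> 0"
  proof (rule ccontr)
    assume "\<not> ?thesis"
    then have "fun_inner (Phi N C H M) (Phi N C G L) = 0" for M
      by (auto simp: fun_inner_Phi)
    then have "Phi N C G L = (\<lambda>X. 0)"
      by (subst expansion(1)) simp
    then show False
      using fun_inner_Phi_BH[OF assms(1,3), of L L] by (simp add: fun_inner_def)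
  qed
qed

lemma row_equiv_if_QH_eq:
  fixes H G :: "'b::{field,finite} \<Rightarrow> 'a::finite^'n \<Rightarrow> complex" and D :: "('b^'m::finite) set"
  assumes "N > 0" and "p > 0" and "c0 \<in> C"
    and BH: "is_BH N p C H" and BG: "is_BH N p C G"
    and D: "vec.subspace D" "axis j0 1 \<notin> D" "d \<in> D" "d $ j0 = 1"
    and QH_eq: "QH N C H D = QH N C G D"
  shows "row_equiv p C H G"
proof -
  define U where "U mu lam = fun_inner (phi N C H mu) (phi N C G lam)" for mu lam
  have in_QH: "Phi N C G L \<in> QH N C H D" if "L \<in> D" for L
    using Phi_in_QH[OF that] QH_eq by simp
  note overlap = Phi_in_QH_overlap[OF assms(1) BH BG in_QH, folded U_def]
  have "\<exists>!mu. U mu lam \<noteq> 0" for lam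
    by (rule column_unique_nonzero[where U = U, OF D overlap])
  then obtain \<sigma> where \<sigma>: "\<And>mu lam. U mu lam \<noteq> 0 \<longleftrightarrow> mu = \<sigma> lam"
    by metis
  have "\<exists>\<beta>. \<forall>c\<in>C. G lam c = \<beta> * H (\<sigma> lam) c" for lam
  proof -
    define L where "L = lam *s d"
    have L: "L \<in> D" "L $ j0 = lam"
      unfolding L_def using vec.subspace_scale[OF D(1,3)] D(4) by simp_all
    define M where "M = (\<chi> j. \<sigma> (L $ j))"
    have "fun_inner (Phi N C H M') (Phi N C G L) = 0" if "M' \<noteq> M" for M'
    proof -
      from that obtain j where "M' $ j \<noteq> \<sigma> (L $ j)"
        by (auto simp: M_def vec_eq_iff)
      then have "U (M' $ j) (L $ j) = 0"
        using \<sigma> by blast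
      then show ?thesis
        unfolding fun_inner_Phi U_def[symmetric] by (intro prod_zero) auto
    qed
    then have "Phi N C G L X = fun_inner (Phi N C H M) (Phi N C G L) * Phi N C H M X" for X
      by (subst QH_single_term[OF assms(1) BH in_QH[OF L(1)]]) auto
    then obtain \<beta> where "\<forall>c\<in>C. G (L $ j0) c = \<beta> * H (M $ j0) c"
      using rows_proportional_if_Phi_proportional[OF assms(1-3) BG] by blast
    then show ?thesis
      using L(2) by (simp add: M_def)
  qed
  then obtain w where "\<And>lam c. c \<in> C \<Longrightarrow> G lam c = w lam * H (\<sigma> lam) c"
    by metis
  then show ?thesis
    by (rule row_equiv_if_rows_proportional[OF assms(1-3) BH BG])
qed

lemma row_equiv_sym:
  assumes "p > 0" and "row_equiv p C H G"
  shows "row_equiv p C G H"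
proof -
  obtain \<sigma> w where \<sigma>: "bij \<sigma>" and root: "\<And>lam. w lam ^ p = 1"
    and G: "\<And>lam c. c \<in> C \<Longrightarrow> G lam c = w lam * H (\<sigma> lam) c"
    using assms(2) unfolding row_equiv_def by blast
  define w' where "w' lam = inverse (w (inv \<sigma> lam))" for lam
  have "w lam \<noteq> 0" for lam
    using root root_of_unity_nonzero assms(1) by blast
  then have "H lam c = w' lam * G (inv \<sigma> lam) c" if "c \<in> C" for lam c
    using G[OF that, of "inv \<sigma> lam"] by (simp add: w'_def surj_f_inv_f[OF bij_is_surj[OF \<sigma>]])
  moreover have "w' lam ^ p = 1" for lam
    by (simp add: w'_def power_inverse root)
  ultimately show ?thesis
    unfolding row_equiv_def using bij_imp_bij_inv[OF \<sigma>] by blast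
qed

lemma Phi_rows_proportional:
  assumes "\<And>lam c. c \<in> C \<Longrightarrow> G lam c = w lam * H (\<sigma> lam) c"
  shows "Phi N C G L = (\<lambda>X. (\<Prod>j\<in>UNIV. w (L $ j)) * Phi N C H (\<chi> j. \<sigma> (L $ j)) X)"
proof -
  have "phi N C G lam x = w lam * phi N C H (\<sigma> lam) x" for lam x
    unfolding phi_def using assms by (simp add: mult_ac)
  then show ?thesis
    unfolding Phi_def by (simp add: prod.distrib)
qed

lemma QH_subset_if_Phi_reindex:
  assumes "bij_betw \<tau> D D" and "\<And>L. L \<in> D \<Longrightarrow> Phi N C G L = (\<lambda>X. s L * Phi N C H (\<tau> L) X)"
  shows "QH N C G D \<subseteq> QH N C H D"
proof
  fix F assume "F \<in> QH N C G D"
  then obtain a where F: "F = (\<lambda>X. \<Sum>L\<in>D. a L * Phi N C G L X)"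
    unfolding QH_def by blast
  define b where "b M = a (inv_into D \<tau> M) * s (inv_into D \<tau> M)" for M
  have "(\<Sum>M\<in>D. b M * Phi N C H M X) = (\<Sum>L\<in>D. b (\<tau> L) * Phi N C H (\<tau> L) X)" for X
    by (rule sum.reindex_bij_betw[OF assms(1), symmetric])
  also have "\<dots> X = (\<Sum>L\<in>D. a L * Phi N C G L X)" for X
    using assms by (intro sum.cong) (simp_all add: b_def bij_betw_inv_into_left)
  finally have "F = (\<lambda>X. \<Sum>M\<in>D. b M * Phi N C H M X)"
    unfolding F by simp
  then show "F \<in> QH N C H D"
    unfolding QH_def by blast
qed

lemma QH_diagonal_subset_if_row_equiv:
  fixes H G :: "'b::finite \<Rightarrow> 'a::finite^'n \<Rightarrow> complex"
  assumes "row_equiv p C H G"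
  shows "QH N C G (range (vec :: 'b \<Rightarrow> 'b^'m::finite)) \<subseteq> QH N C H (range vec)"
proof -
  obtain \<sigma> w where \<sigma>: "bij \<sigma>" and G: "\<And>lam c. c \<in> C \<Longrightarrow> G lam c = w lam * H (\<sigma> lam) c"
    using assms unfolding row_equiv_def by blast
  define \<tau> :: "'b^'m \<Rightarrow> 'b^'m" where "\<tau> L = (\<chi> j. \<sigma> (L $ j))" for L
  have \<tau>_vec: "\<tau> (vec lam) = vec (\<sigma> lam)" for lam
    by (simp add: \<tau>_def vec_eq_iff)
  have vec_inj: "inj (vec :: 'b \<Rightarrow> 'b^'m)"
    by (simp add: inj_def vec_eq_iff)
  have "inj_on \<tau> (range vec)"
    using vec_inj bij_is_inj[OF \<sigma>] by (auto simp: inj_on_def inj_def \<tau>_vec)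
  moreover have "\<tau> ` range vec = vec ` (\<sigma> ` UNIV)"
    by (simp add: image_image \<tau>_vec)
  ultimately have "bij_betw \<tau> (range vec) (range vec)"
    using bij_is_surj[OF \<sigma>] by (simp add: bij_betw_def)
  then show ?thesis
    using Phi_rows_proportional[where G = G and H = H and w = w and \<sigma> = \<sigma>, OF G]
    unfolding \<tau>_def by (rule QH_subset_if_Phi_reindex)
qed

theorem proposition2p4:
  fixes p r q k n :: nat
    and C :: "('a::{field,finite}^'n) set"
    and H H' :: "'b::{field,finite} \<Rightarrow> 'a^'n \<Rightarrow> complex"
  assumes "prime p" and "r \<ge> 1" and "q = p ^ r"
    and "CARD('a) = q" and "CARD('b) = q ^ k"
    and "linear_code C k"
    and "is_BH (q ^ k) p C H" and "is_BH (q ^ k) p C H'"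
  shows "(\<forall>(D :: ('b^'m::finite) set) s.
            linear_code D s \<and> 0 < s \<and> s < CARD('m) \<and> (\<forall>i. \<exists>d\<in>D. d $ i = 1) \<and>
            QH (q ^ k) C H D = QH (q ^ k) C H' D
            \<longrightarrow> row_equiv p C H H')
       \<and> (row_equiv p C H H' \<longrightarrow>
            QH (q ^ k) C H (range (vec :: 'b \<Rightarrow> 'b^'m)) = QH (q ^ k) C H' (range vec))"
proof -
  have p: "p > 0"
    using assms(1) prime_gt_0_nat by blast
  have N: "q ^ k > 0"
    using p assms(3) by simp
  have C: "0 \<in> C"
    using assms(6) vec.subspace_0 unfolding linear_code_def by blast
  show ?thesis
  proof (intro conjI allI impI)
    fix D :: "('b^'m) set" and s
    assume D: "linear_code D s \<and> 0 < s \<and> s < CARD('m) \<and> (\<forall>i. \<exists>d\<in>D. d $ i = 1) \<and>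
      QH (q ^ k) C H D = QH (q ^ k) C H' D"
    then obtain j0 where "axis j0 1 \<notin> D"
      using axis_notin_if_dim_less unfolding linear_code_def by blast
    moreover obtain d where "d \<in> D" "d $ j0 = 1"
      using D by blast
    ultimately show "row_equiv p C H H'"
      using row_equiv_if_QH_eq[OF N p C assms(7,8)] D unfolding linear_code_def by blast
  next
    assume "row_equiv p C H H'"
    then show "QH (q ^ k) C H (range vec) = QH (q ^ k) C H' (range vec)"
      using QH_diagonal_subset_if_row_equiv row_equiv_sym[OF p] by (metis subset_antisym)
  qed
qed

end
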